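(* Let $q\in\mathbb{N}$ be odd and square-free. Then for any fixed $\varepsilon>0$, \[\widehat{B}_3(q)\ll_{\varepsilon}q^{\varepsilon}\,\widehat{B}_2(q),\] the implied constant depending only on $\varepsilon$.
   Context: For an integral quadratic form $Q$ in $n$ variables, $\widehat{m}(Q;q):=\min\{\|\mathbf{x}\|:\ \mathbf{x}\in\mathbb{Z}^n\setminus\{\mathbf{0}\},\ \exists t\in\mathbb{Z},\ Q(\mathbf{x})\equiv t^2\pmod q\}$, with $\|\cdot\|$ the Euclidean norm, and $\widehat{B}_n(q):=\max_Q\widehat{m}(Q;q)$, the maximum over all integral quadratic forms $Q$ in $n$ variables with $\gcd(\det(Q),q)=1$. Since $q$ is odd, $Q$ is represented modulo $q$ by a symmetric integer matrix $M$ with $Q(\mathbf{x})\equiv\mathbf{x}^TM\mathbf{x}\pmod q$, and $\det(Q)$ means $\det(M)$. *)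

theory Defs
  imports "HOL-Analysis.Analysis" "HOL-Number_Theory.Number_Theory" "HOL-Computational_Algebra.Squarefree"
begin

text \<open>A quadratic form in n variables (n given by the finite index type 'n) modulo an odd q
  is represented by a symmetric integer matrix M, with Q(x) = x^T M x.\<close>

definition qform :: "int^'n^'n \<Rightarrow> int^'n \<Rightarrow> int" where
  "qform M x = (\<Sum>i\<in>UNIV. \<Sum>j\<in>UNIV. M$i$j * x$i * x$j)"

definition enorm :: "int^'n \<Rightarrow> real" where
  "enorm x = sqrt (\<Sum>i\<in>UNIV. (real_of_int (x$i))^2)"

definition mhat :: "int^'n^'n \<Rightarrow> nat \<Rightarrow> real" where
  "mhat M q = Inf {enorm x | x. x \<noteq> 0 \<and> (\<exists>t::int. [qform M x = t^2] (mod int q))}"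

definition Bhat :: "'n::finite itself \<Rightarrow> nat \<Rightarrow> real" where
  "Bhat _ q = Sup {mhat (M::int^'n^'n) q | M. transpose M = M \<and> coprime (det M) (int q)}"

end

theory Submission
  imports Defs "HOL-Real_Asymp.Real_Asymp"
begin

text \<open>
  Restrict a ternary form Q to the points x = s (a y1 + a^3 y2, -y1, -y2): then
  Q(x) = s^2 Q_a(y) for a binary form Q_a whose determinant is a polynomial D(a) of degree 6,
  and three coefficients of D combine to 2 det Q, so D does not vanish identically modulo any
  prime factor of the odd modulus q coprime to det Q.
  Let N be least with 6 #{p | q. p > N} < N and write q = s r, r the product of the prime
  factors above N. Counting roots of D modulo these primes gives some 0 <= a < N with Q_a
  nondegenerate modulo r, and the Chinese remainder theorem replaces Q_a modulo s by the
  identity, giving a binary form Q' with det Q' coprime to q. A vector y at which Q' is a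
  square modulo q yields a vector x at which Q is a square modulo q, with |x| <= 2 s N^3 |y|.
  Finally s divides the primorial of N, so s <= 4^N, while the minimality of N forces
  q >= N^((N - 1)/6); hence s N^3 = O(q^eps).
\<close>

lemma synthetic_div_nonzero_mod:
  fixes f :: "int poly" and p :: int
  assumes f: "\<exists>i. \<not> p dvd Polynomial.coeff f i" and root: "p dvd poly f a"
  shows "\<exists>i. \<not> p dvd Polynomial.coeff (synthetic_div f a) i"
    and "degree (synthetic_div f a) < degree f"
proof -
  have f_eq: "f = [:-a, 1:] * synthetic_div f a + [:poly f a:]"
    by (rule synthetic_div_correct'[symmetric])
  show "\<exists>i. \<not> p dvd Polynomial.coeff (synthetic_div f a) i"
  proof (rule ccontr)
    assume "\<not> (\<exists>i. \<not> p dvd Polynomial.coeff (synthetic_div f a) i)"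
    then have "[:p:] dvd synthetic_div f a" by (simp add: const_poly_dvd_iff)
    moreover have "[:p:] dvd [:poly f a:]" using root by (simp add: const_poly_dvd_const_poly_iff)
    ultimately have "[:p:] dvd f" by (subst f_eq) (intro dvd_add dvd_mult)
    with f show False by (simp add: const_poly_dvd_iff)
  qed
  have "degree f \<noteq> 0"
  proof
    assume "degree f = 0"
    then obtain c where "f = [:c:]" by (elim degree_eq_zeroE)
    moreover obtain i where "\<not> p dvd Polynomial.coeff f i" using f by blast
    ultimately show False using root by (cases i) auto
  qed
  then show "degree (synthetic_div f a) < degree f" by (simp add: degree_synthetic_div)
qed

lemma card_roots_mod_prime_le_degree:
  fixes f :: "int poly" and p :: int
  assumes p: "prime p" and "finite A" and inj: "inj_on (\<lambda>a. a mod p) A"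
    and "\<exists>i. \<not> p dvd Polynomial.coeff f i"
  shows "card {a\<in>A. p dvd poly f a} \<le> degree f"
  using assms(4)
proof (induction "degree f" arbitrary: f rule: less_induct)
  case less
  show ?case
  proof (cases "\<exists>a0\<in>A. p dvd poly f a0")
    case False
    then have "{a\<in>A. p dvd poly f a} = {}" by blast
    then show ?thesis by (simp only: card.empty)
  next
    case True
    then obtain a0 where a0: "a0 \<in> A" "p dvd poly f a0" by blast
    define g where "g = synthetic_div f a0"
    have f_eq: "f = [:-a0, 1:] * g + [:poly f a0:]"
      unfolding g_def by (rule synthetic_div_correct'[symmetric])
    note g = synthetic_div_nonzero_mod[OF less.prems a0(2), folded g_def]
    have "{a\<in>A. p dvd poly f a} \<subseteq> insert a0 {a\<in>A. p dvd poly g a}"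
    proof
      fix a assume a: "a \<in> {a\<in>A. p dvd poly f a}"
      show "a \<in> insert a0 {a\<in>A. p dvd poly g a}"
      proof (cases "p dvd poly g a")
        case False
        have "poly f a - poly f a0 = (a - a0) * poly g a"
          by (subst (1) f_eq) (simp add: algebra_simps)
        then have "p dvd (a - a0) * poly g a" using a a0(2) by (metis (mono_tags) dvd_diff mem_Collect_eq)
        then have "a mod p = a0 mod p" using p False by (simp add: prime_dvd_mult_iff mod_eq_dvd_iff)
        with inj a a0(1) show ?thesis by (auto dest: inj_onD)
      qed (use a in auto)
    qed
    then have "card {a\<in>A. p dvd poly f a} \<le> card (insert a0 {a\<in>A. p dvd poly g a})"
      using \<open>finite A\<close> by (intro card_mono) auto
    also have "\<dots> \<le> Suc (card {a\<in>A. p dvd poly g a})" by (rule card_insert_le_m1) auto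
    finally have "card {a\<in>A. p dvd poly f a} \<le> Suc (card {a\<in>A. p dvd poly g a})" .
    moreover have "card {a\<in>A. p dvd poly g a} \<le> degree g" using less.hyps g by blast
    ultimately show ?thesis using g(2) by linarith
  qed
qed

lemma prod_prime_factors_dvd:
  fixes n :: nat
  assumes "n \<noteq> 0"
  shows "\<Prod>(prime_factors n) dvd n"
proof -
  have "\<Prod>(prime_factors n) dvd (\<Prod>p\<in>prime_factors n. p ^ multiplicity p n)"
    using assms by (intro prod_dvd_prod dvd_power) (auto simp: prime_factors_multiplicity)
  also have "\<dots> = n" using prod_prime_factors[OF assms] by simp
  finally show ?thesis .
qed

lemma squarefree_prod_prime_factors:
  fixes n :: nat
  assumes "squarefree n"
  shows "\<Prod>(prime_factors n) = n"
proof -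
  have n: "n \<noteq> 0" using assms not_squarefree_0 by metis
  have "\<Prod>(prime_factors n) = (\<Prod>p\<in>prime_factors n. p ^ multiplicity p n)"
    using assms squarefree_factorial_semiring'[OF n] by (intro prod.cong) auto
  also have "\<dots> = n" using prod_prime_factors[OF n] by simp
  finally show ?thesis .
qed

lemma odd_central_binomial_le: "(2*m+1) choose m \<le> 4^m"
proof -
  have "2 * ((2*m+1) choose m) = (\<Sum>k\<in>{m, m+1}. (2*m+1) choose k)"
    using binomial_symmetric[of m "2*m+1"] by simp
  also have "\<dots> \<le> (\<Sum>k\<le>2*m+1. (2*m+1) choose k)" by (rule sum_mono2) auto
  also have "\<dots> = 2^(2*m+1)" by (rule choose_row_sum)
  also have "\<dots> = 2 * 4^m" by (simp add: power_mult)
  finally show ?thesis by simp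
qed

lemma prod_primes_between_dvd_binomial:
  "\<Prod>{p::nat. prime p \<and> m+1 < p \<and> p \<le> 2*m+1} dvd (2*m+1) choose m"
proof -
  have "{p::nat. prime p \<and> m+1 < p \<and> p \<le> 2*m+1} \<subseteq> prime_factors ((2*m+1) choose m)"
  proof
    fix p assume "p \<in> {p::nat. prime p \<and> m+1 < p \<and> p \<le> 2*m+1}"
    then have p: "prime p" "m+1 < p" "p \<le> 2*m+1" by auto
    have "fact m * fact (m+1) * ((2*m+1) choose m) = (fact (2*m+1) :: nat)"
      using binomial_fact_lemma[of m "2*m+1"] by simp
    moreover have "p dvd fact (2*m+1)" "\<not> p dvd fact m" "\<not> p dvd fact (m+1)"
      using p by (subst prime_dvd_fact_iff[OF p(1)], linarith)+
    ultimately have "p dvd (2*m+1) choose m"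
      using p(1) by (metis dvd_triv_right prime_dvd_mult_iff)
    then show "p \<in> prime_factors ((2*m+1) choose m)"
      using p(1) by (auto simp: in_prime_factors_iff)
  qed
  then have "\<Prod>{p::nat. prime p \<and> m+1 < p \<and> p \<le> 2*m+1} dvd \<Prod>(prime_factors ((2*m+1) choose m))"
    by (intro prod_dvd_prod_subset) auto
  also have "\<dots> dvd (2*m+1) choose m" by (intro prod_prime_factors_dvd) simp
  finally show ?thesis .
qed

lemma primorial_le_four_pow: "\<Prod>{p::nat. prime p \<and> p \<le> n} \<le> 4^n"
proof (induction n rule: less_induct)
  case (less n)
  consider "n < 2" | "n = 2" | "n > 2" "even n" | m where "n = 2*m+1" "m \<ge> 1"
  proof -
    have "n < 2 \<or> n = 2 \<or> (n > 2 \<and> even n) \<or> (\<exists>m. n = 2*m+1 \<and> m \<ge> 1)" by presburger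
    then show ?thesis using that by blast
  qed
  then show ?case
  proof cases
    case 1
    then have no_primes: "{p::nat. prime p \<and> p \<le> n} = {}" by (auto dest: prime_ge_2_nat)
    show ?thesis unfolding no_primes by simp
  next
    case 2
    moreover have "{p::nat. prime p \<and> p \<le> 2} = {2}" by (auto dest: prime_ge_2_nat simp: le_less)
    ultimately show ?thesis by simp
  next
    case 3
    then have "{p::nat. prime p \<and> p \<le> n} = {p. prime p \<and> p \<le> n - 1}"
      by (auto simp: le_less dest: prime_odd_nat)
    then have "\<Prod>{p::nat. prime p \<and> p \<le> n} \<le> 4^(n - 1)" using less[of "n - 1"] 3 by simp
    also have "\<dots> \<le> 4^n" by (rule power_increasing) auto
    finally show ?thesis .
  next
    case 4
    let ?A = "{p::nat. prime p \<and> p \<le> m+1}" and ?B = "{p::nat. prime p \<and> m+1 < p \<and> p \<le> 2*m+1}"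
    have "\<Prod>?B \<le> (2*m+1) choose m"
      by (rule dvd_imp_le[OF prod_primes_between_dvd_binomial]) simp
    also have "\<dots> \<le> 4^m" by (rule odd_central_binomial_le)
    finally have B_le: "\<Prod>?B \<le> 4^m" .
    have A_le: "\<Prod>?A \<le> 4^(m+1)" using less[of "m+1"] 4 by simp
    have "{p::nat. prime p \<and> p \<le> n} = ?A \<union> ?B" using 4 by auto
    then have "\<Prod>{p::nat. prime p \<and> p \<le> n} = \<Prod>?A * \<Prod>?B"
      by (simp add: prod.union_disjoint[symmetric] disjoint_iff)
    also have "\<dots> \<le> 4^(m+1) * 4^m" using A_le B_le by (rule mult_le_mono)
    also have "\<dots> = 4^n" using 4 by (simp add: power_add[symmetric])
    finally show ?thesis .
  qed
qed

lemma det_cong: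
  fixes A B :: "int^'n^'n"
  assumes "\<And>i j. [A$i$j = B$i$j] (mod m)"
  shows "[det A = det B] (mod m)"
  unfolding det_def using assms by (intro cong_sum cong_mult cong_refl cong_prod)

lemma qform_cong:
  fixes A B :: "int^'n^'n"
  assumes "\<And>i j. [A$i$j = B$i$j] (mod m)"
  shows "[qform A x = qform B x] (mod m)"
  unfolding qform_def using assms by (intro cong_sum cong_mult cong_refl)

lemma symmetric_form_crt:
  fixes M :: "int^'n^'n" and r s :: int
  assumes "coprime s r" and sym: "transpose M = M" and det: "coprime (det M) r"
  obtains M' where "transpose M' = M'" "coprime (det M') (s * r)"
    "\<And>x. [qform M' x = qform M x] (mod r)"
proof -
  obtain c d where "c * s + d * r = 1"
    using bezout_int[of s r] \<open>coprime s r\<close> by auto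
  then have sc: "s * c = 1 - r * d" and rd: "r * d = 1 - s * c" by (simp_all add: algebra_simps)
  define M' :: "int^'n^'n" where "M' = (\<chi> i j. s * c * M$i$j + r * d * mat 1 $i$j)"
  have mod_r: "[M'$i$j = M$i$j] (mod r)" for i j
  proof -
    have "M'$i$j - M$i$j = r * (d * mat 1 $i$j - d * M$i$j)"
      by (simp add: M'_def sc) (simp add: algebra_simps)
    then show ?thesis by (simp add: cong_iff_dvd_diff)
  qed
  have mod_s: "[M'$i$j = mat 1 $i$j] (mod s)" for i j
  proof -
    have "M'$i$j - mat 1 $i$j = s * (c * M$i$j - c * mat 1 $i$j)"
      by (simp add: M'_def rd) (simp add: algebra_simps)
    then show ?thesis by (simp add: cong_iff_dvd_diff)
  qed
  show ?thesis
  proof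
    show "transpose M' = M'"
      using sym by (simp add: M'_def transpose_def mat_def vec_eq_iff)
    have "coprime (det M') r" using det cong_imp_coprime[OF cong_sym[OF det_cong[OF mod_r]]] by blast
    moreover have "coprime (det M') s"
      using det_cong[OF mod_s] by (metis cong_imp_coprime cong_sym coprime_1_left det_I)
    ultimately show "coprime (det M') (s * r)" by simp
    show "[qform M' x = qform M x] (mod r)" for x by (rule qform_cong[OF mod_r])
  qed
qed

lemma qform_smult: "qform M (c *s x) = c^2 * qform M x"
  by (simp add: qform_def sum_distrib_left power2_eq_square algebra_simps)

lemma enorm_nonneg: "enorm x \<ge> 0"
  unfolding enorm_def by (intro real_sqrt_ge_zero sum_nonneg) auto

lemma enorm_smult: "enorm (c *s x) = \<bar>real_of_int c\<bar> * enorm x"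
  by (simp add: enorm_def power_mult_distrib sum_distrib_left[symmetric] real_sqrt_mult)

lemma enorm_axis: "enorm (axis i c) = \<bar>real_of_int c\<bar>"
proof -
  have "(\<Sum>k\<in>UNIV. (real_of_int (axis i c $ k))^2) = (real_of_int c)^2"
    by (subst sum.remove[of _ i]) (auto simp: axis_def)
  then show ?thesis unfolding enorm_def by simp
qed

lemma qform_axis: "qform M (axis i c) = M$i$i * c^2"
proof -
  have "(\<Sum>j\<in>UNIV. M$k$j * axis i c $ k * axis i c $ j) = (if k = i then M$i$i * c^2 else 0)" for k
    by (cases "k = i") (simp_all add: axis_def power2_eq_square if_distrib[of "\<lambda>x. _ * x"] cong: if_cong)
  then show ?thesis unfolding qform_def by simp
qed

definition admissible_norms :: "int^'n^'n \<Rightarrow> nat \<Rightarrow> real set" where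
  "admissible_norms M q = {enorm x | x. x \<noteq> 0 \<and> (\<exists>t. [qform M x = t^2] (mod int q))}"

lemma mhat_eq_Inf_admissible_norms: "mhat M q = Inf (admissible_norms M q)"
  unfolding mhat_def admissible_norms_def ..

lemma bdd_below_admissible_norms: "bdd_below (admissible_norms M q)"
  unfolding admissible_norms_def by (rule bdd_belowI[of _ 0]) (auto simp: enorm_nonneg)

lemma mhat_le_admissible: "x \<noteq> 0 \<Longrightarrow> [qform M x = t^2] (mod int q) \<Longrightarrow> mhat M q \<le> enorm x"
  unfolding mhat_eq_Inf_admissible_norms
  by (rule cInf_lower[OF _ bdd_below_admissible_norms]) (auto simp: admissible_norms_def)

lemma q_in_admissible_norms:
  fixes M :: "int^'n^'n"
  assumes "q > 0"
  shows "real q \<in> admissible_norms M q"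
proof -
  have "axis undefined (int q) \<noteq> (0 :: int^'n)" using assms by (simp add: axis_eq_0_iff)
  moreover have "[qform M (axis undefined (int q)) = 0^2] (mod int q)"
    by (simp add: qform_axis cong_0_iff)
  moreover have "real q = enorm (axis undefined (int q) :: int^'n)" by (simp add: enorm_axis)
  ultimately show ?thesis
    unfolding admissible_norms_def by blast
qed

lemma mhat_bounds:
  fixes M :: "int^'n^'n"
  assumes "q > 0"
  shows "0 \<le> mhat M q" "mhat M q \<le> real q"
proof -
  have q_in: "real q \<in> admissible_norms M q" by (rule q_in_admissible_norms[OF assms])
  show "0 \<le> mhat M q" unfolding mhat_eq_Inf_admissible_norms
    by (rule cInf_greatest) (use q_in in blast, auto simp: admissible_norms_def enorm_nonneg)
  show "mhat M q \<le> real q" unfolding mhat_eq_Inf_admissible_norms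
    by (rule cInf_lower[OF q_in bdd_below_admissible_norms])
qed

lemma mhat_le_mult_mhat:
  fixes M :: "int^'n^'n" and M' :: "int^'m^'m"
  assumes "q > 0" "K > 0"
    and transfer: "\<And>y t. y \<noteq> 0 \<Longrightarrow> [qform M' y = t^2] (mod int q) \<Longrightarrow>
      \<exists>x u. x \<noteq> 0 \<and> [qform M x = u^2] (mod int q) \<and> enorm x \<le> K * enorm y"
  shows "mhat M q \<le> K * mhat M' q"
proof -
  have "mhat M q / K \<le> Inf (admissible_norms M' q)"
  proof (rule cInf_greatest)
    show "admissible_norms M' q \<noteq> {}" using q_in_admissible_norms[OF \<open>q > 0\<close>] by blast
    fix z assume "z \<in> admissible_norms M' q"
    then obtain y t where "z = enorm y" "y \<noteq> 0" "[qform M' y = t^2] (mod int q)"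
      unfolding admissible_norms_def by blast
    then obtain x u where "x \<noteq> 0" "[qform M x = u^2] (mod int q)" "enorm x \<le> K * z"
      using transfer by blast
    then have "mhat M q \<le> K * z" by (meson mhat_le_admissible order_trans)
    with \<open>K > 0\<close> show "mhat M q / K \<le> z" by (simp add: divide_le_eq mult.commute)
  qed
  with \<open>K > 0\<close> show ?thesis
    unfolding mhat_eq_Inf_admissible_norms by (simp add: divide_le_eq mult.commute)
qed

lemma Bhat_eq_Sup:
  "Bhat TYPE('n::finite) q = Sup {mhat (M::int^'n^'n) q | M. transpose M = M \<and> coprime (det M) (int q)}"
  unfolding Bhat_def ..

lemma bdd_above_mhats:
  assumes "q > 0"
  shows "bdd_above {mhat (M::int^'n::finite^'n) q | M. transpose M = M \<and> coprime (det M) (int q)}"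
  by (rule bdd_aboveI[of _ "real q"]) (auto intro: mhat_bounds(2)[OF assms])

lemma mhat_le_Bhat:
  fixes M :: "int^'n::finite^'n"
  assumes "q > 0" "transpose M = M" "coprime (det M) (int q)"
  shows "mhat M q \<le> Bhat TYPE('n) q"
  unfolding Bhat_eq_Sup using assms by (intro cSup_upper bdd_above_mhats) auto

lemma Bhat_nonneg:
  assumes "q > 0"
  shows "0 \<le> Bhat TYPE('n::finite) q"
proof -
  have "mhat (mat 1 :: int^'n^'n) q \<le> Bhat TYPE('n) q" by (rule mhat_le_Bhat[OF assms]) simp_all
  with mhat_bounds(1)[OF assms, of "mat 1 :: int^'n^'n"] show ?thesis by linarith
qed

lemma Bhat_le_mult_Bhat:
  assumes "q > 0" "K \<ge> 0"
    and "\<And>M::int^'n^'n. transpose M = M \<Longrightarrow> coprime (det M) (int q) \<Longrightarrow>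
      \<exists>M'::int^'m^'m. transpose M' = M' \<and> coprime (det M') (int q) \<and> mhat M q \<le> K * mhat M' q"
  shows "Bhat TYPE('n::finite) q \<le> K * Bhat TYPE('m::finite) q"
proof -
  let ?S = "{mhat (M::int^'n^'n) q | M. transpose M = M \<and> coprime (det M) (int q)}"
  have "Sup ?S \<le> K * Bhat TYPE('m) q"
  proof (rule cSup_least)
    show "?S \<noteq> {}" by (auto intro!: exI[of _ "mat 1"])
    fix z assume "z \<in> ?S"
    then obtain M :: "int^'n^'n" where "z = mhat M q" "transpose M = M" "coprime (det M) (int q)"
      by blast
    with assms(3) obtain M' :: "int^'m^'m" where
      "transpose M' = M'" "coprime (det M') (int q)" "z \<le> K * mhat M' q"
      by blast
    with assms(1,2) show "z \<le> K * Bhat TYPE('m) q"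
      by (meson mhat_le_Bhat mult_left_mono order_trans)
  qed
  then show ?thesis by (simp only: Bhat_eq_Sup)
qed

definition curve_embedding :: "int \<Rightarrow> int^2 \<Rightarrow> int^3" where
  "curve_embedding a y = vector [a * y$1 + a^3 * y$2, - y$1, - y$2]"

definition pullback_form :: "int^3^3 \<Rightarrow> int \<Rightarrow> int^2^2" where
  "pullback_form M a =
    (let b = M$1$1 * a^4 - M$1$2 * a^3 - M$1$3 * a + M$2$3
     in vector [vector [M$1$1 * a^2 - 2 * M$1$2 * a + M$2$2, b],
                vector [b, M$1$1 * a^6 - 2 * M$1$3 * a^3 + M$3$3]])"

definition pullback_det_poly :: "int^3^3 \<Rightarrow> int poly" where
  "pullback_det_poly M =
    [: M$2$2 * M$3$3 - (M$2$3)^2, 2 * (M$1$3 * M$2$3 - M$1$2 * M$3$3), M$1$1 * M$3$3 - (M$1$3)^2,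
       2 * (M$1$2 * M$2$3 - M$1$3 * M$2$2), 2 * (M$1$2 * M$1$3 - M$1$1 * M$2$3), 0,
       M$1$1 * M$2$2 - (M$1$2)^2 :]"

lemma symmetric_entry:
  assumes "transpose M = M"
  shows "M$j$i = M$i$j"
proof -
  have "transpose M $ i $ j = M $ i $ j" using assms by simp
  then show ?thesis by (simp add: transpose_def)
qed

lemma qform_curve_embedding:
  assumes "transpose M = M"
  shows "qform M (curve_embedding a y) = qform (pullback_form M a) y"
  using symmetric_entry[OF assms, of 1 2] symmetric_entry[OF assms, of 1 3]
    symmetric_entry[OF assms, of 2 3]
  by (simp add: qform_def sum_3 sum_2 curve_embedding_def pullback_form_def Let_def
      algebra_simps eval_nat_numeral)

lemma transpose_pullback_form: "transpose (pullback_form M a) = pullback_form M a"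
  by (simp add: pullback_form_def Let_def transpose_def vec_eq_iff forall_2)

lemma det_pullback_form: "det (pullback_form M a) = poly (pullback_det_poly M) a"
  by (simp add: det_2 pullback_form_def pullback_det_poly_def Let_def algebra_simps eval_nat_numeral)

lemma degree_pullback_det_poly: "degree (pullback_det_poly M) \<le> 6"
  unfolding pullback_det_poly_def by (rule order_trans[OF degree_pCons_le], simp)+

lemma two_det_eq_pullback_det_coeffs:
  assumes "transpose M = M"
  shows "2 * det M = 2 * M$1$1 * Polynomial.coeff (pullback_det_poly M) 0
    + M$1$2 * Polynomial.coeff (pullback_det_poly M) 1 + M$1$3 * Polynomial.coeff (pullback_det_poly M) 3"
  using symmetric_entry[OF assms, of 1 2] symmetric_entry[OF assms, of 1 3]
    symmetric_entry[OF assms, of 2 3]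
  by (simp add: det_3 pullback_det_poly_def algebra_simps eval_nat_numeral)

lemma pullback_det_poly_nonzero_mod:
  assumes "transpose M = M" and "prime p" and "\<not> p dvd 2 * det M"
  shows "\<exists>i. \<not> p dvd Polynomial.coeff (pullback_det_poly M) i"
  using assms(3) unfolding two_det_eq_pullback_det_coeffs[OF assms(1)]
  by (meson dvd_add dvd_mult)

lemma curve_embedding_eq_0_iff: "curve_embedding a y = 0 \<longleftrightarrow> y = 0"
  by (auto simp: curve_embedding_def vec_eq_iff forall_2 forall_3)

lemma enorm_curve_embedding_le:
  assumes "0 \<le> a" "a \<le> int N" "1 \<le> N"
  shows "enorm (curve_embedding a y) \<le> 2 * real N ^ 3 * enorm y"
proof -
  define A y1 y2 where "A = real_of_int a" and "y1 = real_of_int (y$1)" and "y2 = real_of_int (y$2)"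
  have A: "0 \<le> A" "A \<le> real N" "1 \<le> real N" using assms by (simp_all add: A_def)
  have "(A * y1 + A^3 * y2)^2 + y1^2 + y2^2 = (1 + A^2 + A^6) * (y1^2 + y2^2) - (A^3 * y1 - A * y2)^2"
    by (simp add: algebra_simps eval_nat_numeral)
  also have "\<dots> \<le> (1 + A^2 + A^6) * (y1^2 + y2^2)" by simp
  also have "\<dots> \<le> (2 * real N ^ 3)^2 * (y1^2 + y2^2)"
  proof (rule mult_right_mono)
    have "A^2 \<le> real N ^ 6" "A^6 \<le> real N ^ 6" "1 \<le> real N ^ 6"
      using A by (auto intro: power_mono order_trans[OF _ power_increasing[of 2 6]])
    then show "1 + A^2 + A^6 \<le> (2 * real N ^ 3)^2" by (simp add: power_mult_distrib flip: power_mult)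
  qed simp
  finally have "enorm (curve_embedding a y) \<le> sqrt ((2 * real N ^ 3)^2 * (y1^2 + y2^2))"
    by (simp add: enorm_def sum_3 curve_embedding_def A_def y1_def y2_def)
  also have "\<dots> = 2 * real N ^ 3 * sqrt (y1^2 + y2^2)"
    by (simp only: real_sqrt_mult real_sqrt_abs) simp
  also have "sqrt (y1^2 + y2^2) = enorm y"
    by (simp add: enorm_def sum_2 y1_def y2_def)
  finally show ?thesis .
qed

lemma exists_common_nonroot_mod_primes:
  fixes f :: "int poly" and R :: "nat set"
  assumes "finite R" and "degree f * card R < N"
    and R: "\<And>p. p \<in> R \<Longrightarrow> prime p \<and> N \<le> p \<and> (\<exists>i. \<not> int p dvd Polynomial.coeff f i)"
  shows "\<exists>a. 0 \<le> a \<and> a < int N \<and> (\<forall>p\<in>R. \<not> int p dvd poly f a)"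
proof -
  define roots where "roots p = {a \<in> {0..<int N}. int p dvd poly f a}" for p
  have card_roots: "card (roots p) \<le> degree f" if "p \<in> R" for p
  proof -
    have "inj_on (\<lambda>a. a mod int p) {0..<int N}"
      using R[OF that] by (intro inj_onI) simp
    then show ?thesis
      unfolding roots_def using R[OF that] by (intro card_roots_mod_prime_le_degree) auto
  qed
  have "card (\<Union>p\<in>R. roots p) \<le> (\<Sum>p\<in>R. card (roots p))"
    by (rule card_UN_le[OF \<open>finite R\<close>])
  also have "\<dots> \<le> (\<Sum>p\<in>R. degree f)" by (rule sum_mono) (rule card_roots)
  also have "\<dots> < card {0..<int N}" using \<open>degree f * card R < N\<close> by (simp add: mult.commute)
  finally have "card (\<Union>p\<in>R. roots p) < card {0..<int N}" .
  moreover have "finite (\<Union>p\<in>R. roots p)"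
    using \<open>finite R\<close> by (auto simp: roots_def intro: finite_subset[of _ "{0..<int N}"])
  ultimately have "\<not> {0..<int N} \<subseteq> (\<Union>p\<in>R. roots p)" by (meson card_mono not_le)
  then show ?thesis by (auto simp: roots_def)
qed

definition large_prime_factors :: "nat \<Rightarrow> nat \<Rightarrow> nat set" where
  "large_prime_factors q N = {p \<in> prime_factors q. N < p}"

definition threshold :: "nat \<Rightarrow> nat" where
  "threshold q = (LEAST N. 6 * card (large_prime_factors q N) < N)"

definition small_part :: "nat \<Rightarrow> nat" where
  "small_part q = \<Prod>{p \<in> prime_factors q. p \<le> threshold q}"

lemma threshold_spec:
  assumes "q > 0"
  shows "6 * card (large_prime_factors q (threshold q)) < threshold q"
proof -
  have "p \<le> q" if "p \<in> prime_factors q" for p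
    using that assms by (simp add: dvd_imp_le in_prime_factors_iff)
  then have "large_prime_factors q q = {}" unfolding large_prime_factors_def using leD by blast
  then have "6 * card (large_prime_factors q q) < q" using assms by simp
  then show ?thesis unfolding threshold_def by (rule LeastI)
qed

lemma squarefree_split_prime_factors:
  fixes q :: nat
  assumes "squarefree q"
  shows "q = \<Prod>{p \<in> prime_factors q. p \<le> N} * \<Prod>(large_prime_factors q N)"
    and "coprime (\<Prod>{p \<in> prime_factors q. p \<le> N}) (\<Prod>(large_prime_factors q N))"
proof -
  have "\<Prod>{p \<in> prime_factors q. p \<le> N} * \<Prod>(large_prime_factors q N)
      = \<Prod>({p \<in> prime_factors q. p \<le> N} \<union> large_prime_factors q N)"
    by (rule prod.union_disjoint[symmetric]) (auto simp: large_prime_factors_def)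
  also have "{p \<in> prime_factors q. p \<le> N} \<union> large_prime_factors q N = prime_factors q"
    by (auto simp: large_prime_factors_def)
  also have "\<Prod>(prime_factors q) = q" by (rule squarefree_prod_prime_factors[OF assms])
  finally show "q = \<Prod>{p \<in> prime_factors q. p \<le> N} * \<Prod>(large_prime_factors q N)" ..
  show "coprime (\<Prod>{p \<in> prime_factors q. p \<le> N}) (\<Prod>(large_prime_factors q N))"
    by (intro prod_coprime_left prod_coprime_right primes_coprime)
      (auto simp: large_prime_factors_def in_prime_factors_iff)
qed

lemma small_part_le_four_pow: "small_part q \<le> 4 ^ threshold q"
proof -
  have "small_part q dvd \<Prod>{p. prime p \<and> p \<le> threshold q}"
    unfolding small_part_def by (rule prod_dvd_prod_subset) (auto simp: in_prime_factors_iff)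
  then have "small_part q \<le> \<Prod>{p. prime p \<and> p \<le> threshold q}"
    by (rule dvd_imp_le) (auto intro!: prod_pos simp: prime_gt_0_nat)
  also have "\<dots> \<le> 4 ^ threshold q" by (rule primorial_le_four_pow)
  finally show ?thesis .
qed

lemma pow_card_large_prime_factors_le:
  assumes "q > 0"
  shows "Suc N ^ card (large_prime_factors q N) \<le> q"
proof -
  have "Suc N ^ card (large_prime_factors q N) = (\<Prod>p\<in>large_prime_factors q N. Suc N)" by simp
  also have "\<dots> \<le> \<Prod>(large_prime_factors q N)"
    by (rule prod_mono) (auto simp: large_prime_factors_def)
  also have "\<dots> \<le> q"
  proof (rule dvd_imp_le)
    have "\<Prod>(large_prime_factors q N) dvd \<Prod>(prime_factors q)"
      by (rule prod_dvd_prod_subset) (auto simp: large_prime_factors_def)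
    also have "\<dots> dvd q" using assms by (intro prod_prime_factors_dvd) simp
    finally show "\<Prod>(large_prime_factors q N) dvd q" .
  qed fact
  finally show ?thesis .
qed

text \<open>Minimality of the threshold N forces q to have at least (N - 1)/6 prime factors
  that are \<open>\<ge> N\<close>.\<close>
lemma threshold_powr_le:
  assumes "q > 0"
  shows "real (threshold q) powr ((real (threshold q) - 1) / 6) \<le> real q"
proof -
  define N where "N = threshold q"
  have "N \<ge> 1" using threshold_spec[OF assms] unfolding N_def by simp
  show ?thesis
  proof (cases "N = 1")
    case True
    then show ?thesis using assms unfolding N_def by simp
  next
    case False
    define g where "g = card (large_prime_factors q (N - 1))"
    have "N - 1 < N" using \<open>N \<ge> 1\<close> by simp
    then have "\<not> 6 * g < N - 1"
      unfolding g_def N_def threshold_def by (rule not_less_Least)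
    then have "(real N - 1) / 6 \<le> real g" using \<open>N \<ge> 1\<close> by simp
    then have "real N powr ((real N - 1) / 6) \<le> real N powr real g"
      using \<open>N \<ge> 1\<close> by (intro powr_mono) auto
    also have "\<dots> = real (N ^ g)" using \<open>N \<ge> 1\<close> by (simp add: powr_realpow)
    also have "N ^ g \<le> q"
      using pow_card_large_prime_factors_le[OF assms, of "N - 1"] \<open>N \<ge> 1\<close> by (simp add: g_def)
    finally show ?thesis unfolding N_def by simp
  qed
qed

lemma four_pow_mult_cube_le_powr:
  fixes c :: real
  assumes "c > 0"
  shows "\<exists>C>0. \<forall>n::nat. n \<ge> 1 \<longrightarrow> 4^n * real n ^ 3 \<le> C * real n powr (c * (real n - 1))"
proof -
  define f where "f x = 4 powr x * x^3 / x powr (c * (x - 1))" for x :: real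
  have "(f \<longlongrightarrow> 0) at_top" unfolding f_def using assms by real_asymp
  then have "((\<lambda>n. f (real n)) \<longlongrightarrow> 0) sequentially"
    by (rule filterlim_compose[OF _ filterlim_real_sequentially])
  then have "eventually (\<lambda>n. f (real n) < 1) sequentially" by (rule order_tendstoD) simp
  then obtain n0 where n0: "\<And>n. n \<ge> n0 \<Longrightarrow> f (real n) < 1"
    by (auto simp: eventually_sequentially)
  define C where "C = 1 + (\<Sum>n<n0. 4^n * real n ^ 3)"
  have "C \<ge> 1" unfolding C_def by (intro add_increasing2 sum_nonneg) auto
  have "4^n * real n ^ 3 \<le> C * real n powr (c * (real n - 1))" if "n \<ge> 1" for n
  proof -
    have "1 \<le> real n powr (c * (real n - 1))"
      using that assms by (intro ge_one_powr_ge_zero) auto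
    moreover have "4^n * real n ^ 3 \<le> C \<or> 4^n * real n ^ 3 \<le> real n powr (c * (real n - 1))"
    proof (cases "n < n0")
      case True
      then have "4^n * real n ^ 3 \<le> (\<Sum>n<n0. 4^n * real n ^ 3)" by (intro member_le_sum) auto
      then show ?thesis unfolding C_def by simp
    next
      case False
      then show ?thesis
        using n0[of n] that by (simp add: f_def divide_less_eq powr_realpow)
    qed
    ultimately show ?thesis using \<open>C \<ge> 1\<close>
      by (smt (verit) mult_le_cancel_right1 mult_le_cancel_left1)
  qed
  with \<open>C \<ge> 1\<close> show ?thesis by (intro exI[of _ C]) auto
qed

lemma small_part_threshold_le_powr:
  fixes \<epsilon> :: real
  assumes "\<epsilon> > 0"
  shows "\<exists>C>0. \<forall>q. q > 0 \<longrightarrow> real (small_part q) * real (threshold q) ^ 3 \<le> C * real q powr \<epsilon>"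
proof -
  obtain C where "C > 0"
    and C: "\<And>n. n \<ge> 1 \<Longrightarrow> 4^n * real n ^ 3 \<le> C * real n powr (\<epsilon> / 6 * (real n - 1))"
    using four_pow_mult_cube_le_powr[of "\<epsilon> / 6"] assms by auto
  have "real (small_part q) * real (threshold q) ^ 3 \<le> C * real q powr \<epsilon>" if "q > 0" for q
  proof -
    define N where "N = threshold q"
    have "N \<ge> 1" using threshold_spec[OF that] unfolding N_def by simp
    have "real (small_part q) * real N ^ 3 \<le> 4^N * real N ^ 3"
      using small_part_le_four_pow[of q] unfolding N_def
      by (intro mult_right_mono) (simp_all flip: of_nat_power)
    also have "\<dots> \<le> C * real N powr (\<epsilon> / 6 * (real N - 1))" using C \<open>N \<ge> 1\<close> by blast
    also have "\<dots> \<le> C * real q powr \<epsilon>"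
    proof (rule mult_left_mono)
      have "real N powr (\<epsilon> / 6 * (real N - 1)) = (real N powr ((real N - 1) / 6)) powr \<epsilon>"
        by (simp add: powr_powr mult.commute)
      also have "\<dots> \<le> real q powr \<epsilon>"
        using threshold_powr_le[OF that] assms unfolding N_def by (intro powr_mono2) auto
      finally show "real N powr (\<epsilon> / 6 * (real N - 1)) \<le> real q powr \<epsilon>" .
    qed (use \<open>C > 0\<close> in simp)
    finally show ?thesis unfolding N_def .
  qed
  with \<open>C > 0\<close> show ?thesis by blast
qed

lemma prime_factor_not_dvd_double_coprime:
  fixes d :: int
  assumes "odd q" "coprime d (int q)" "p \<in> prime_factors q"
  shows "\<not> int p dvd 2 * d"
proof -
  have p: "prime p" "p dvd q" using assms(3) by (auto simp: in_prime_factors_iff)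
  have "\<not> int p dvd d"
  proof
    assume "int p dvd d"
    then have "is_unit (int p)"
      using assms(2) p(2) by (intro coprime_common_divisor[of d "int q"]) auto
    with p(1) show False by (simp add: prime_gt_1_nat)
  qed
  moreover have "\<not> int p dvd 2"
  proof
    assume "int p dvd 2"
    then have "p \<le> 2" using int_dvd_int_iff[of p 2] by (simp add: dvd_imp_le)
    with prime_ge_2_nat[OF p(1)] have "p = 2" by simp
    with p(2) \<open>odd q\<close> show False by simp
  qed
  moreover have "prime (int p)" using p(1) by simp
  ultimately show ?thesis by (simp add: prime_dvd_mult_iff)
qed

lemma exists_pullback_coprime_large_part:
  fixes M :: "int^3^3"
  assumes "odd q" and sym: "transpose M = M" and "coprime (det M) (int q)"
  obtains a where "0 \<le> a" "a < int (threshold q)"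
    "coprime (det (pullback_form M a)) (int (\<Prod>(large_prime_factors q (threshold q))))"
proof -
  have "q > 0" using \<open>odd q\<close> by (auto intro: odd_pos)
  define N R where "N = threshold q" and "R = large_prime_factors q N"
  have R: "prime p \<and> N < p \<and> \<not> int p dvd 2 * det M" if "p \<in> R" for p
    using that assms prime_factor_not_dvd_double_coprime[of q "det M" p]
    by (auto simp: R_def large_prime_factors_def in_prime_factors_iff)
  have "finite R" by (simp add: R_def large_prime_factors_def)
  moreover have "degree (pullback_det_poly M) * card R < N"
    using threshold_spec[OF \<open>q > 0\<close>] degree_pullback_det_poly[of M]
    unfolding R_def N_def by (meson le_less_trans mult_le_mono1)
  moreover have "prime p \<and> N \<le> p \<and> (\<exists>i. \<not> int p dvd Polynomial.coeff (pullback_det_poly M) i)"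
    if "p \<in> R" for p
    using R[OF that] pullback_det_poly_nonzero_mod[OF sym] by auto
  ultimately have
    "\<exists>a. 0 \<le> a \<and> a < int N \<and> (\<forall>p\<in>R. \<not> int p dvd poly (pullback_det_poly M) a)"
    by (rule exists_common_nonroot_mod_primes)
  then obtain a where a: "0 \<le> a" "a < int N"
    and nonroot: "\<And>p. p \<in> R \<Longrightarrow> \<not> int p dvd poly (pullback_det_poly M) a"
    by blast
  have "coprime (det (pullback_form M a)) (\<Prod>p\<in>R. int p)"
    using R nonroot by (intro prod_coprime_right) (simp add: det_pullback_form coprime_commute prime_imp_coprime)
  with a show ?thesis using that unfolding R_def N_def of_nat_prod by simp
qed

lemma mhat_le_mult_mhat_pullback:
  fixes M :: "int^3^3" and M' :: "int^2^2"
  assumes "q = s * r" "q > 0" and sym: "transpose M = M" and a: "0 \<le> a" "a \<le> int N" "1 \<le> N"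
    and M'_cong: "\<And>y. [qform M' y = qform (pullback_form M a) y] (mod int r)"
  shows "mhat M q \<le> 2 * real s * real N ^ 3 * mhat M' q"
proof -
  have "s > 0" using assms(1,2) by simp
  show ?thesis
  proof (rule mhat_le_mult_mhat)
    fix y t assume "y \<noteq> 0" and sq: "[qform M' y = t^2] (mod int q)"
    define x where "x = int s *s curve_embedding a y"
    have "[qform M' y = t^2] (mod int r)"
      by (rule cong_dvd_modulus[OF sq]) (simp add: \<open>q = s * r\<close>)
    then have "[qform (pullback_form M a) y = t^2] (mod int r)"
      by (rule cong_trans[OF cong_sym[OF M'_cong]])
    then have "[int s * (int s * qform (pullback_form M a) y) = int s * (int s * t^2)]
        (mod int s * int r)"
      by (intro cong_scalar_left cong_cmult_leftI)
    then have "[qform M x = (int s * t)^2] (mod int q)"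
      by (simp add: x_def \<open>q = s * r\<close> qform_smult qform_curve_embedding[OF sym]
          power2_eq_square algebra_simps)
    moreover have "x \<noteq> 0"
      using \<open>y \<noteq> 0\<close> \<open>s > 0\<close> curve_embedding_eq_0_iff[of a y] by (auto simp: x_def vec_eq_iff)
    moreover have "enorm x \<le> 2 * real s * real N ^ 3 * enorm y"
    proof -
      have "enorm x = real s * enorm (curve_embedding a y)" by (simp add: x_def enorm_smult)
      also have "\<dots> \<le> real s * (2 * real N ^ 3 * enorm y)"
        using enorm_curve_embedding_le[OF a] by (intro mult_left_mono) auto
      finally show ?thesis by (simp add: mult_ac)
    qed
    ultimately show "\<exists>x u. x \<noteq> 0 \<and> [qform M x = u^2] (mod int q) \<and>
      enorm x \<le> 2 * real s * real N ^ 3 * enorm y" by blast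
  qed (use \<open>q > 0\<close> \<open>s > 0\<close> \<open>1 \<le> N\<close> in auto)
qed

lemma ternary_mhat_le_binary_mhat:
  fixes M :: "int^3^3"
  assumes "odd q" "squarefree q" and sym: "transpose M = M" and det: "coprime (det M) (int q)"
  shows "\<exists>M'::int^2^2. transpose M' = M' \<and> coprime (det M') (int q) \<and>
    mhat M q \<le> 2 * real (small_part q) * real (threshold q) ^ 3 * mhat M' q"
proof -
  have "q > 0" using \<open>odd q\<close> by (auto intro: odd_pos)
  define N s r where "N = threshold q" and "s = small_part q"
    and "r = \<Prod>(large_prime_factors q N)"
  have q_eq: "q = s * r" and "coprime s r"
    using squarefree_split_prime_factors[OF \<open>squarefree q\<close>, of N]
    unfolding s_def r_def N_def small_part_def by simp_all
  have "N \<ge> 1" using threshold_spec[OF \<open>q > 0\<close>] unfolding N_def by simp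
  obtain a where a: "0 \<le> a" "a < int N" and "coprime (det (pullback_form M a)) (int r)"
    using exists_pullback_coprime_large_part[OF \<open>odd q\<close> sym det] unfolding N_def r_def by blast
  then obtain M' where M': "transpose M' = M'" "coprime (det M') (int s * int r)"
    and "\<And>y. [qform M' y = qform (pullback_form M a) y] (mod int r)"
    using symmetric_form_crt[of "int s" "int r" "pullback_form M a"] \<open>coprime s r\<close>
    by (auto simp: transpose_pullback_form)
  then have "mhat M q \<le> 2 * real s * real N ^ 3 * mhat M' q"
    using a \<open>N \<ge> 1\<close> by (intro mhat_le_mult_mhat_pullback[OF q_eq \<open>q > 0\<close> sym]) auto
  moreover have "coprime (det M') (int q)" using M'(2) by (simp add: q_eq)
  ultimately show ?thesis using M'(1) unfolding s_def N_def by blast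
qed

theorem lemma4:
  fixes \<epsilon> :: real
  assumes "\<epsilon> > 0"
  shows "\<exists>C>0. \<forall>q::nat. odd q \<and> squarefree q \<longrightarrow>
           Bhat TYPE(3) q \<le> C * (real q) powr \<epsilon> * Bhat TYPE(2) q"
proof -
  obtain C where "C > 0"
    and C: "\<And>q. q > 0 \<Longrightarrow> real (small_part q) * real (threshold q) ^ 3 \<le> C * real q powr \<epsilon>"
    using small_part_threshold_le_powr[OF assms] by blast
  have "Bhat TYPE(3) q \<le> 2 * C * real q powr \<epsilon> * Bhat TYPE(2) q" if "odd q" "squarefree q" for q
  proof -
    have "q > 0" using \<open>odd q\<close> by (auto intro: odd_pos)
    have "Bhat TYPE(3) q \<le> 2 * real (small_part q) * real (threshold q) ^ 3 * Bhat TYPE(2) q"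
      using ternary_mhat_le_binary_mhat[OF that] by (intro Bhat_le_mult_Bhat[OF \<open>q > 0\<close>]) auto
    also have "\<dots> \<le> 2 * C * real q powr \<epsilon> * Bhat TYPE(2) q"
      using C[OF \<open>q > 0\<close>] Bhat_nonneg[OF \<open>q > 0\<close>] by (intro mult_right_mono) auto
    finally show ?thesis .
  qed
  with \<open>C > 0\<close> show ?thesis by (intro exI[of _ "2 * C"]) auto
qed

end
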